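(* Let $N \ge 1$ and let $f_N(t) = \sum_{n=1}^N c_n e^{\alpha_n t}$ with real coefficients $c_n$ and pairwise distinct nonzero real rate constants $\alpha_n$ (no sign condition on $f_N$ is assumed). For $k \ge 0$ let $$I_{(k)}(t) := \int_0^{t}\int_0^{t^{(1)}}\cdots\int_0^{t^{(k)}} f_N(t^{(k+1)})\, dt^{(k+1)} \cdots dt^{(1)}$$ denote the $(k+1)$-fold iterated integral of $f_N$ from $0$. Let $t_1,\dots,t_{2N+1}$ be distinct nonnegative reals. Given $\{f_N(t_i) : i = 1,\dots,2N\}$ and $\{I_{(k)}(t_i) : k = 1,2,\dots,N,\ i = 1,\dots,2N+1\}$, the coefficients $c_n$ and rate constants $\alpha_n$, $n = 1,\dots,N$, are uniquely determined. *)

theory Defs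
  imports "HOL-Analysis.Analysis"
begin

definition expsum :: "nat \<Rightarrow> (nat \<Rightarrow> real) \<Rightarrow> (nat \<Rightarrow> real) \<Rightarrow> real \<Rightarrow> real" where
  "expsum N c \<alpha> t = (\<Sum>n=1..N. c n * exp (\<alpha> n * t))"

fun iter_int :: "nat \<Rightarrow> (real \<Rightarrow> real) \<Rightarrow> real \<Rightarrow> real" where
  "iter_int 0 g t = integral {0..t} g"
| "iter_int (Suc k) g t = integral {0..t} (iter_int k g)"

end

theory Submission
  imports Defs
begin

text \<open>Only the values of f_N at t_1, ..., t_2N are used. An exponential polynomial
  sum_b d_b exp(b t) with m distinct exponents b and at least m real zeros is zero:
  multiplying it by exp(-b_0 t) and differentiating removes the exponent b_0, and by Rolle's
  theorem loses at most one zero. The difference of the two given sums has at most 2N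
  exponents and vanishes at 2N points, so both sums assign the same coefficient to every
  exponent; since all c_n are nonzero, the two parameter lists then agree up to order.\<close>

lemma Rolle_card_zeros:
  fixes f f' :: "real \<Rightarrow> real"
  assumes deriv: "\<And>x. (f has_real_derivative f' x) (at x)"
    and "finite Z" "card Z = Suc n" "\<forall>z\<in>Z. f z = 0"
  shows "\<exists>Z'. finite Z' \<and> card Z' = n \<and> Z' \<subseteq> {Min Z<..<Max Z} \<and> (\<forall>z\<in>Z'. f' z = 0)"
  using assms(2-)
proof (induction n arbitrary: Z)
  case 0
  then show ?case by auto
next
  case (Suc n)
  define m where "m = Max Z"
  define Z0 where "Z0 = Z - {m}"
  have "m \<in> Z" using Suc.prems unfolding m_def by (intro Max_in) auto
  then have "finite Z0" "card Z0 = Suc n" using Suc.prems by (auto simp: Z0_def)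
  then have "Z0 \<noteq> {}" by auto
  obtain Z' where Z': "finite Z'" "card Z' = n" "Z' \<subseteq> {Min Z0<..<Max Z0}" "\<forall>z\<in>Z'. f' z = 0"
    using Suc.IH[OF \<open>finite Z0\<close> \<open>card Z0 = Suc n\<close>] Suc.prems(3) by (auto simp: Z0_def)
  have "Max Z0 \<in> Z0" using \<open>finite Z0\<close> \<open>Z0 \<noteq> {}\<close> by simp
  then have "Max Z0 < m" "f (Max Z0) = f m"
    using Suc.prems \<open>m \<in> Z\<close> by (auto simp: m_def Z0_def order_less_le)
  moreover have "continuous_on {Max Z0..m} f"
    using deriv by (meson DERIV_isCont continuous_at_imp_continuous_on)
  ultimately obtain \<xi> where \<xi>: "Max Z0 < \<xi>" "\<xi> < m" "f' \<xi> = 0"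
    using Rolle_deriv[of "Max Z0" m f "\<lambda>x v. f' x * v"] deriv
    by (metis has_field_derivative_def mult_cancel_left1 order.refl)
  have "Min Z \<le> Min Z0" using Suc.prems(1) \<open>Z0 \<noteq> {}\<close> by (simp add: Z0_def Min_antimono)
  moreover have "Min Z0 \<le> Max Z0" using \<open>finite Z0\<close> \<open>Z0 \<noteq> {}\<close> by simp
  moreover have "\<xi> \<notin> Z'" using Z'(3) \<xi>(1) by auto
  ultimately show ?case
    using Z' \<xi> by (intro exI[of _ "insert \<xi> Z'"]) (auto simp: m_def)
qed

lemma exp_sum_shifted_has_real_derivative:
  fixes d :: "real \<Rightarrow> real"
  shows "((\<lambda>z. exp (- \<beta>\<^sub>0 * z) * (\<Sum>\<beta>\<in>B. d \<beta> * exp (\<beta> * z))) has_real_derivative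
     exp (- \<beta>\<^sub>0 * x) * (\<Sum>\<beta>\<in>B. d \<beta> * (\<beta> - \<beta>\<^sub>0) * exp (\<beta> * x))) (at x)"
  by (auto intro!: derivative_eq_intros simp: sum_distrib_left sum_subtractf[symmetric] algebra_simps)

lemma exp_sum_zeros_imp_coeffs_zero:
  fixes d :: "real \<Rightarrow> real"
  assumes "finite B" "finite Z" "card B \<le> card Z" "\<forall>z\<in>Z. (\<Sum>\<beta>\<in>B. d \<beta> * exp (\<beta> * z)) = 0"
  shows "\<forall>\<beta>\<in>B. d \<beta> = 0"
  using assms
proof (induction B arbitrary: d Z rule: finite_induct)
  case empty
  then show ?case by simp
next
  case (insert \<beta>\<^sub>0 B)
  obtain Z\<^sub>1 where Z\<^sub>1: "Z\<^sub>1 \<subseteq> Z" "card Z\<^sub>1 = Suc (card B)" "finite Z\<^sub>1"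
    using insert.prems(2) insert.hyps by (metis card_insert_disjoint obtain_subset_with_card_n)
  have "\<forall>z\<in>Z\<^sub>1. exp (- \<beta>\<^sub>0 * z) * (\<Sum>\<beta>\<in>insert \<beta>\<^sub>0 B. d \<beta> * exp (\<beta> * z)) = 0"
    using insert.prems(3) Z\<^sub>1(1) by auto
  then obtain Z' where Z': "finite Z'" "card Z' = card B"
    "\<forall>z\<in>Z'. exp (- \<beta>\<^sub>0 * z) * (\<Sum>\<beta>\<in>insert \<beta>\<^sub>0 B. d \<beta> * (\<beta> - \<beta>\<^sub>0) * exp (\<beta> * z)) = 0"
    using Rolle_card_zeros[OF exp_sum_shifted_has_real_derivative Z\<^sub>1(3,2)] by blast
  then have "\<forall>z\<in>Z'. (\<Sum>\<beta>\<in>B. d \<beta> * (\<beta> - \<beta>\<^sub>0) * exp (\<beta> * z)) = 0"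
    using insert.hyps by simp
  then have "\<forall>\<beta>\<in>B. d \<beta> * (\<beta> - \<beta>\<^sub>0) = 0"
    using insert.IH[of Z' "\<lambda>\<beta>. d \<beta> * (\<beta> - \<beta>\<^sub>0)"] Z'(1,2) by simp
  then have dB: "\<forall>\<beta>\<in>B. d \<beta> = 0"
    using insert.hyps(2) by auto
  obtain z where "z \<in> Z" using Z\<^sub>1(1,2) by fastforce
  then have "d \<beta>\<^sub>0 = 0"
    using insert.prems(3) insert.hyps dB by auto
  then show ?case using dB by simp
qed

definition expsum_coeff :: "nat \<Rightarrow> (nat \<Rightarrow> real) \<Rightarrow> (nat \<Rightarrow> real) \<Rightarrow> real \<Rightarrow> real" where
  "expsum_coeff N c \<alpha> \<beta> = (if \<beta> \<in> \<alpha> ` {1..N} then c (inv_into {1..N} \<alpha> \<beta>) else 0)"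

lemma expsum_coeff_rate:
  assumes "inj_on \<alpha> {1..N}" "n \<in> {1..N}"
  shows "expsum_coeff N c \<alpha> (\<alpha> n) = c n"
  using assms by (simp add: expsum_coeff_def)

lemma expsum_eq_sum_coeff:
  assumes "inj_on \<alpha> {1..N}" "finite B" "\<alpha> ` {1..N} \<subseteq> B"
  shows "expsum N c \<alpha> x = (\<Sum>\<beta>\<in>B. expsum_coeff N c \<alpha> \<beta> * exp (\<beta> * x))"
proof -
  have "expsum N c \<alpha> x = (\<Sum>\<beta>\<in>\<alpha> ` {1..N}. expsum_coeff N c \<alpha> \<beta> * exp (\<beta> * x))"
    using assms(1) by (simp add: expsum_def sum.reindex expsum_coeff_rate)
  also have "\<dots> = (\<Sum>\<beta>\<in>B. expsum_coeff N c \<alpha> \<beta> * exp (\<beta> * x))"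
    using assms(2,3) by (intro sum.mono_neutral_left) (auto simp: expsum_coeff_def)
  finally show ?thesis .
qed

lemma expsum_coeff_eq_if_agree_on_2N_points:
  assumes "inj_on \<alpha> {1..N}" "inj_on \<alpha>' {1..N}"
    and "finite Z" "card Z \<ge> 2 * N" "\<forall>z\<in>Z. expsum N c \<alpha> z = expsum N c' \<alpha>' z"
  shows "expsum_coeff N c \<alpha> = expsum_coeff N c' \<alpha>'"
proof
  fix \<beta>
  define B where "B = \<alpha> ` {1..N} \<union> \<alpha>' ` {1..N}"
  have "finite B" by (simp add: B_def)
  have "card B \<le> card Z"
    using card_Un_le[of "\<alpha> ` {1..N}" "\<alpha>' ` {1..N}"] assms(1,2,4) by (simp add: B_def card_image)
  moreover have "\<forall>z\<in>Z. (\<Sum>\<beta>\<in>B. (expsum_coeff N c \<alpha> \<beta> - expsum_coeff N c' \<alpha>' \<beta>) * exp (\<beta> * z)) = 0"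
    using assms(5) expsum_eq_sum_coeff[OF assms(1) \<open>finite B\<close>] expsum_eq_sum_coeff[OF assms(2) \<open>finite B\<close>]
    by (simp add: B_def left_diff_distrib sum_subtractf)
  ultimately have "\<forall>\<beta>\<in>B. expsum_coeff N c \<alpha> \<beta> - expsum_coeff N c' \<alpha>' \<beta> = 0"
    by (rule exp_sum_zeros_imp_coeffs_zero[OF \<open>finite B\<close> assms(3)])
  then show "expsum_coeff N c \<alpha> \<beta> = expsum_coeff N c' \<alpha>' \<beta>"
    by (cases "\<beta> \<in> B") (auto simp: B_def expsum_coeff_def)
qed

lemma expsum_coeff_eq_imp_permuted:
  assumes "inj_on \<alpha>' {1..N}" "\<forall>n\<in>{1..N}. c' n \<noteq> 0"
    and "expsum_coeff N c \<alpha> = expsum_coeff N c' \<alpha>'"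
  shows "\<exists>\<sigma>. bij_betw \<sigma> {1..N} {1..N} \<and> (\<forall>n\<in>{1..N}. c' n = c (\<sigma> n) \<and> \<alpha>' n = \<alpha> (\<sigma> n))"
proof -
  define \<sigma> where "\<sigma> n = inv_into {1..N} \<alpha> (\<alpha>' n)" for n
  have "\<alpha>' n \<in> \<alpha> ` {1..N} \<and> c' n = c (\<sigma> n)" if "n \<in> {1..N}" for n
  proof -
    have "expsum_coeff N c \<alpha> (\<alpha>' n) = c' n"
      using assms(1,3) that by (simp add: expsum_coeff_rate)
    with assms(2) that show ?thesis
      by (auto simp: \<sigma>_def expsum_coeff_def split: if_splits)
  qed
  then have \<sigma>: "\<sigma> n \<in> {1..N} \<and> \<alpha>' n = \<alpha> (\<sigma> n) \<and> c' n = c (\<sigma> n)" if "n \<in> {1..N}" for n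
    using that unfolding \<sigma>_def by (metis inv_into_into f_inv_into_f)
  then have "inj_on \<sigma> {1..N}"
    using assms(1) by (metis inj_on_def)
  moreover have "\<sigma> ` {1..N} \<subseteq> {1..N}"
    using \<sigma> by blast
  ultimately have "bij_betw \<sigma> {1..N} {1..N}"
    by (simp add: bij_betw_def endo_inj_surj)
  with \<sigma> show ?thesis by metis
qed

theorem corollary4:
  fixes N :: nat and c \<alpha> c' \<alpha>' :: "nat \<Rightarrow> real" and t :: "nat \<Rightarrow> real"
  assumes "N \<ge> 1"
    and "inj_on \<alpha> {1..N}" and "\<forall>n\<in>{1..N}. \<alpha> n \<noteq> 0" and "\<forall>n\<in>{1..N}. c n \<noteq> 0"
    and "inj_on \<alpha>' {1..N}" and "\<forall>n\<in>{1..N}. \<alpha>' n \<noteq> 0" and "\<forall>n\<in>{1..N}. c' n \<noteq> 0"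
    and "inj_on t {1..2*N+1}" and "\<forall>i\<in>{1..2*N+1}. t i \<ge> 0"
    and "\<forall>i\<in>{1..2*N}. expsum N c \<alpha> (t i) = expsum N c' \<alpha>' (t i)"
    and "\<forall>k\<in>{1..N}. \<forall>i\<in>{1..2*N+1}.
           iter_int k (expsum N c \<alpha>) (t i) = iter_int k (expsum N c' \<alpha>') (t i)"
  shows "\<exists>\<sigma>. bij_betw \<sigma> {1..N} {1..N} \<and> (\<forall>n\<in>{1..N}. c' n = c (\<sigma> n) \<and> \<alpha>' n = \<alpha> (\<sigma> n))"
proof -
  have "inj_on t {1..2*N}"
    using assms(8) by (rule inj_on_subset) auto
  then have "card (t ` {1..2*N}) \<ge> 2 * N"
    by (simp add: card_image)
  then have "expsum_coeff N c \<alpha> = expsum_coeff N c' \<alpha>'"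
    using expsum_coeff_eq_if_agree_on_2N_points[OF assms(2,5), of "t ` {1..2*N}"] assms(10) by simp
  then show ?thesis
    using expsum_coeff_eq_imp_permuted[OF assms(5,7)] by simp
qed

end
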